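(* Let $T$ be an AVL tree with $n$ nodes, let $a$ be its number of depth-0 nodes (leaves), $b$ its number of depth-1 nodes and $b_2$ its number of balanced depth-1 nodes, and set $\alpha=a/n$ and $\beta_2=b_2/b$. If $\alpha\le 0.4$, then \[\beta_2\le\frac{3\alpha-1}{1-\alpha}.\]
   Context: An AVL tree is a binary tree (each node has an optional left and an optional right child) such that at every node the heights of the left and right subtrees differ by at most $1$, where the height of a tree is the number of edges on a longest root-to-leaf path and the empty tree has height $-1$. The depth of a node is the height of the subtree rooted at that node. A node is balanced if its left and right subtrees have equal height, and unbalanced otherwise; thus a balanced depth-1 node has two leaf children and an unbalanced depth-1 node has exactly one (leaf) child. *)

theory Defs
  imports Complex_Main "HOL-Library.Tree"
begin

text \<open>The library height is shifted by one w.r.t. the paper: library height Leaf = 0,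
  so the paper's height (depth) of a nonempty subtree t is height t - 1.
  Thus depth-0 nodes have library height 1, depth-1 nodes library height 2.\<close>

fun avl :: "'a tree \<Rightarrow> bool" where
  "avl Leaf = True"
| "avl (Node l x r) =
     (\<bar>int (height l) - int (height r)\<bar> \<le> 1 \<and> avl l \<and> avl r)"

fun num_depth0 :: "'a tree \<Rightarrow> nat" where
  "num_depth0 Leaf = 0"
| "num_depth0 (Node l x r) =
     (if height (Node l x r) = 1 then 1 else 0) + num_depth0 l + num_depth0 r"

fun num_depth1 :: "'a tree \<Rightarrow> nat" where
  "num_depth1 Leaf = 0"
| "num_depth1 (Node l x r) =
     (if height (Node l x r) = 2 then 1 else 0) + num_depth1 l + num_depth1 r"

fun num_bal_depth1 :: "'a tree \<Rightarrow> nat" where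
  "num_bal_depth1 Leaf = 0"
| "num_bal_depth1 (Node l x r) =
     (if height (Node l x r) = 2 \<and> height l = height r then 1 else 0)
     + num_bal_depth1 l + num_bal_depth1 r"

end

theory Submission
  imports Defs
begin

text \<open>Counting edges: above depth 1 every node of an AVL tree has two children, a balanced
  depth-1 node has two and an unbalanced one a single child, so
  \<open>n - 1 = 2 (n - a - b) + 2 b\<^sub>2 + (b - b\<^sub>2)\<close>, i.e. \<open>n + 1 + b\<^sub>2 = 2 a + b\<close>.
  Moreover every depth-1 node has its own leaf children, whence \<open>b + b\<^sub>2 \<le> a\<close>.
  With \<open>b\<^sub>2 \<le> b\<close> these give
  \<open>b (3 a - n) - b\<^sub>2 (n - a) = (b - b\<^sub>2) (a - b - b\<^sub>2) + b + b\<^sub>2 \<ge> 0\<close>,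
  which is the claim after dividing by \<open>b n (1 - \<alpha>)\<close>. The hypothesis \<open>\<alpha> \<le> 2/5\<close> only
  serves to make \<open>b\<close> and \<open>1 - \<alpha>\<close> positive.\<close>

lemma avl_children_nonempty:
  assumes "avl (Node l x r)" and "height (Node l x r) > 2"
  shows "l \<noteq> Leaf" and "r \<noteq> Leaf"
  using assms by (auto simp: max_def split: if_splits)

lemma avl_size_num_depth0_num_depth1:
  assumes "avl t" and "t \<noteq> Leaf"
  shows "size t + 1 + num_bal_depth1 t = 2 * num_depth0 t + num_depth1 t"
  using assms
proof (induction t)
  case Leaf
  then show ?case by simp
next
  case (Node l x r)
  show ?case
  proof (cases "height (Node l x r) \<le> 2")
    case True
    then show ?thesis using Node.prems
      by (cases l; cases r) (auto split: if_splits simp: max_def)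
  next
    case False
    then have "l \<noteq> Leaf" "r \<noteq> Leaf"
      using avl_children_nonempty Node.prems(1) by auto
    then show ?thesis using Node False by auto
  qed
qed

lemma num_depth1_add_num_bal_depth1_le_num_depth0:
  "num_depth1 t + num_bal_depth1 t \<le> num_depth0 t"
proof (induction t)
  case Leaf
  then show ?case by simp
next
  case (Node l x r)
  then show ?case
    by (cases "height (Node l x r) = 2"; cases l; cases r) (auto split: if_splits simp: max_def)
qed

lemma num_bal_depth1_le_num_depth1: "num_bal_depth1 t \<le> num_depth1 t"
  by (induction t) auto

lemma balanced_ratio_bound:
  fixes a b c n :: nat
  assumes count: "n + 1 + c = 2 * a + b" and leaves: "b + c \<le> a" and "c \<le> b"
    and "0 < b" and "a < n"
  shows "real c / real b \<le> (3 * (real a / real n) - 1) / (1 - real a / real n)"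
proof -
  have n_eq: "real n = 2 * real a + real b - real c - 1"
    using count by (simp add: of_nat_eq_iff[symmetric] del: of_nat_eq_iff)
  have "real b * (3 * real a - real n) - real c * (real n - real a)
      = (real b - real c) * (real a - real b - real c) + real b + real c"
    unfolding n_eq by (simp add: algebra_simps)
  also have "\<dots> \<ge> 0"
    using leaves \<open>c \<le> b\<close> by simp
  finally have "real c * (real n - real a) \<le> real b * (3 * real a - real n)"
    by simp
  then have "real c / real b \<le> (3 * real a - real n) / (real n - real a)"
    using \<open>0 < b\<close> \<open>a < n\<close> by (simp add: divide_simps algebra_simps)
  also have "\<dots> = (3 * (real a / real n) - 1) / (1 - real a / real n)"
    using \<open>a < n\<close> by (simp add: field_simps)
  finally show ?thesis .
qed

theorem lemma2:
  fixes T :: "'a tree"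
  assumes "avl T"
    and "T \<noteq> Leaf"
    and "real (num_depth0 T) / real (size T) \<le> 2 / 5"
  shows "real (num_bal_depth1 T) / real (num_depth1 T)
           \<le> (3 * (real (num_depth0 T) / real (size T)) - 1)
              / (1 - real (num_depth0 T) / real (size T))"
proof (rule balanced_ratio_bound)
  show count: "size T + 1 + num_bal_depth1 T = 2 * num_depth0 T + num_depth1 T"
    using avl_size_num_depth0_num_depth1 assms(1,2) .
  show bal: "num_bal_depth1 T \<le> num_depth1 T"
    by (rule num_bal_depth1_le_num_depth1)
  have "0 < size T"
    using assms(2) by (cases T) auto
  then have alpha: "5 * num_depth0 T \<le> 2 * size T"
    using assms(3) by (simp add: divide_simps)
  then show "num_depth0 T < size T"
    using \<open>0 < size T\<close> by linarith
  show "0 < num_depth1 T"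
    using count bal alpha by linarith
qed (rule num_depth1_add_num_bal_depth1_le_num_depth0)

end
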